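(* Let $a\in\mathbb Z$ and let $z\ne1$ be a root of unity. Then the sequence $(\mathrm{Li}^\star_{(z)}(s)_{\ge N})_{N\ge2}$ of germs at $a$ has a complete asymptotic expansion relative to $\mathcal E$ with coefficients in $\mathcal C_{(z)}$, and its formal complete asymptotic expansion is equal to zero.
   Context: $\mathrm{Li}^\star_{(z)}(s)_{\ge N}:=\sum_{n\ge N}\frac{z^n}{n^s}$ (for $z\ne1$ a root of unity this extends to an entire function of $s$; its germ at $a$ is meant). $\mathcal E$ is the comparison scale of sequences $((\log n)^ln^{-m})_{n\ge1}$, $l\in\mathbb N$, $m\in\mathbb Z$. For a tuple $\mathbf z$ of roots of unity, $\mathcal C_{\mathbf z}$ is the $\mathbb C$-algebra of sequences generated by $(1)_{n\ge1}$ and $(z_i^n)_{n\ge1}$; it has the basis $\mathcal B_{\mathbf z}$ of sequences $(\xi^n)_{n\ge1}$, $\xi$ running over the distinct values of monomials in the $z_i$. Asymptotic expansions of germs: let $\mathbf a\in\mathbb C^r$ and $\mathcal O_{\mathbf a}$ the germs of holomorphic functions at $\mathbf a$. For $f_n\in\mathcal O_{\mathbf a}$ write $f_n=\sum_{\mathbf k\in\mathbb N^r}c_{\mathbf k}(f_n)(\mathbf s-\mathbf a)^{\mathbf k}$. For $A\in\mathbb Z$, $(f_n)$ has an asymptotic expansion to precision $n^{-A}$ relative to $\mathcal E$ with coefficients in $\mathcal C_{\mathbf z}$ if: (a) for each $\mathbf k$ there are sequences $u_{(\mathbf k,l,m)}\in\mathcal C_{\mathbf z}$ ($l\in\mathbb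 N$, $m\in\mathbb Z$, $m\le A$), zero for all but finitely many $(l,m)$, with $c_{\mathbf k}(f_n)=\sum_{m\le A}\sum_lu_{(\mathbf k,l,m)}(n)(\log n)^ln^{-m}+O(n^{-A})$ as $n\to\infty$; (b) there is $m_0\in\mathbb Z$ with $u_{(\mathbf k,l,m)}=0$ for all $\mathbf k,l$ and all $m\le m_0$; (c) for each $(l,m)$, letting $u_{(\mathbf k,l,m)}$ also denote the coordinate of the sequence $u_{(\mathbf k,l,m)}$ along the constant sequence in the basis $\mathcal B_{\mathbf z}$, the series $g_{(l,m)}:=\sum_{\mathbf k}u_{(\mathbf k,l,m)}(\mathbf s-\mathbf a)^{\mathbf k}$ converges near $\mathbf a$. The formal expansion to precision $n^{-A}$ is $\sum_{m\le A}g_{(l,m)}L^lX^m$. $(f_n)$ has a complete asymptotic expansion if this holds for all $A\in\mathbb Z$; then there is a unique $G=\sum_{(l,m)}g_{(l,m)}L^lX^m\in\mathcal O_{\mathbf a}[[L]]((X))$ whose truncations to $X$-degree $\le A$ are the formal expansions to precision $n^{-A}$; $G$ is the formal complete asymptotic expansion. For germs of meromorphic functions $f_n$, these notions are defined by requiring them for $(ff_n)$ for some nonzero $f\in\mathcal O_{\mathbf a}$ with $ff_n\in\mathcal O_{\mathbf a}$ for all $n$ (independent of $f$), the formal complete expansion being $\sum f^{-1}g_{(l,m)}L^lX^m$ where $\sum g_{(l,m)}L^lX^m$ is that of $(ff_n)$. *)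

theory Defs
  imports "HOL-Analysis.Analysis" "HOL-Library.Landau_Symbols"
begin

definition Li_star :: "complex \<Rightarrow> nat \<Rightarrow> complex \<Rightarrow> complex" where
  "Li_star z N = (THE f. f holomorphic_on UNIV \<and>
      (\<forall>s. 1 < Re s \<longrightarrow> f s = (\<Sum>i. z ^ (i + N) / (of_nat (i + N)) powr s)))"

definition taylor_coeff :: "(complex \<Rightarrow> complex) \<Rightarrow> complex \<Rightarrow> nat \<Rightarrow> complex" where
  "taylor_coeff f a k = (deriv ^^ k) f a / fact k"

definition mono_vals :: "complex list \<Rightarrow> complex set" where
  "mono_vals zs = {(\<Prod>i<length zs. (zs ! i) ^ (e i)) | e. True}"

definition seq_alg :: "complex list \<Rightarrow> (nat \<Rightarrow> complex) set" where
  "seq_alg zs = {u. \<exists>c. \<forall>n\<ge>1. u n = (\<Sum>\<xi>\<in>mono_vals zs. c \<xi> * \<xi> ^ n)}"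

text \<open>Coordinate of a sequence of C_zs along the constant sequence 1.\<close>
definition const_coord :: "complex list \<Rightarrow> (nat \<Rightarrow> complex) \<Rightarrow> complex" where
  "const_coord zs u = (THE c1. \<exists>c. (\<forall>n\<ge>1. u n = (\<Sum>\<xi>\<in>mono_vals zs. c \<xi> * \<xi> ^ n)) \<and> c 1 = c1)"

text \<open>F n k is the k-th Taylor coefficient at a of the n-th germ.  u k l m is the coefficient
  sequence of (log n)^l n^(-m) in the expansion of the k-th Taylor coefficient.\<close>
definition asymp_exp_prec ::
  "complex list \<Rightarrow> complex \<Rightarrow> (nat \<Rightarrow> nat \<Rightarrow> complex) \<Rightarrow> int \<Rightarrow>
   (nat \<Rightarrow> nat \<Rightarrow> int \<Rightarrow> nat \<Rightarrow> complex) \<Rightarrow> bool" where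
  "asymp_exp_prec zs a F A u \<longleftrightarrow>
     (\<forall>k l m. u k l m \<in> seq_alg zs) \<and>
     (\<forall>k l m. A < m \<longrightarrow> u k l m = (\<lambda>_. 0)) \<and>
     (\<forall>k. finite {(l, m). u k l m \<noteq> (\<lambda>_. 0)}) \<and>
     (\<forall>k. (\<lambda>n. F n k - (\<Sum>(l, m)\<in>{(l, m). u k l m \<noteq> (\<lambda>_. 0)}.
              u k l m n * of_real (ln (real n) ^ l * real n powr (- real_of_int m))))
          \<in> O(\<lambda>n. of_real (real n powr (- real_of_int A)))) \<and>
     (\<exists>m0. \<forall>k l m. m \<le> m0 \<longrightarrow> u k l m = (\<lambda>_. 0)) \<and>
     (\<forall>l m. \<exists>\<epsilon>>0. \<forall>s. cmod (s - a) < \<epsilon> \<longrightarrow>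
          summable (\<lambda>k. const_coord zs (u k l m) * (s - a) ^ k))"

definition has_complete_asymp_exp ::
  "complex list \<Rightarrow> complex \<Rightarrow> (nat \<Rightarrow> nat \<Rightarrow> complex) \<Rightarrow> bool" where
  "has_complete_asymp_exp zs a F \<longleftrightarrow> (\<forall>A. \<exists>u. asymp_exp_prec zs a F A u)"

text \<open>G l m is (the Taylor coefficient sequence at a of) the germ g_(l,m), coefficient of L^l X^m.
  G is a formal complete expansion if it lies in O_a[[L]]((X)) and every truncation to
  X-degree \<le> A is a formal expansion to precision n^(-A).\<close>
definition formal_complete_exp ::
  "complex list \<Rightarrow> complex \<Rightarrow> (nat \<Rightarrow> nat \<Rightarrow> complex) \<Rightarrow> (nat \<Rightarrow> int \<Rightarrow> nat \<Rightarrow> complex) \<Rightarrow> bool" where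
  "formal_complete_exp zs a F G \<longleftrightarrow>
     (\<exists>m0. \<forall>l m. m \<le> m0 \<longrightarrow> G l m = (\<lambda>_. 0)) \<and>
     (\<forall>A. \<exists>u. asymp_exp_prec zs a F A u \<and>
        (\<forall>l m. m \<le> A \<longrightarrow> G l m = (\<lambda>k. const_coord zs (u k l m))))"

end

(*
  There are entire functions g_r(s) such that
  h_R(n, s) = z^n * sum_{r<R} g_r(s) n^(-s-r) satisfies
  h_R(n, s) - h_R(n+1, s) = z^n n^(-s) + O(n^(-Re s - R)) locally uniformly in s:
  expanding (n+1)^(-s-r) binomially in powers of 1/n turns this into a triangular
  linear system for the g_r, solvable because z <> 1. Telescoping gives
  Li*(s)_{>=N} = h_R(N, s) + sum_{n>=N} (error terms), an analytic continuation to
  |s| < R - 2, and by Cauchy's inequality the Taylor coefficients at a of the error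
  sum are O(N^(-A)) once R is large. The Taylor coefficients of h_R(N, -) are z^N times
  finite combinations of (log N)^l N^(-m), so every coefficient sequence is a multiple
  of (z^N), whose coordinate along the constant sequence is zero. Finally, expansions
  with periodic coefficients are unique (along a residue class the coefficients are
  constant and the dominant term of the comparison scale must cancel), so the formal
  complete expansion is zero.
*)

theory Submission
  imports Defs "HOL-Real_Asymp.Real_Asymp" "HOL-Complex_Analysis.Complex_Analysis"
begin

section \<open>An approximate antidifference of z^n n^(-s)\<close>

lemma norm_gbinomial_le:
  fixes w :: "'a :: {real_normed_field, field_char_0}"
  assumes "norm w \<le> B" "1 \<le> B"
  shows "norm (w gchoose k) \<le> B ^ k"
proof (induction k)
  case 0
  then show ?case by simp
next
  case (Suc k)
  have "norm (w - of_nat k) \<le> B + k"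
    using assms(1) norm_triangle_ineq4[of w "of_nat k"] by (simp add: norm_of_nat)
  moreover have "norm (of_nat k + 1 :: 'a) = k + 1"
    using norm_of_nat[of "Suc k", where 'a = 'a] by (simp add: add.commute)
  ultimately have "norm ((w - of_nat k) / (of_nat k + 1)) \<le> (B + k) / (k + 1)"
    by (simp add: norm_divide divide_right_mono)
  also have "\<dots> \<le> B"
    using mult_right_mono[OF assms(2), of "real k"] by (simp add: divide_le_eq algebra_simps)
  finally have "norm ((w - of_nat k) / (of_nat k + 1)) \<le> B" .
  then have "norm (w gchoose k) * norm ((w - of_nat k) / (of_nat k + 1)) \<le> B ^ k * B"
    using Suc assms(2) by (intro mult_mono) auto
  then show ?case
    by (simp only: gbinomial_Suc_rec norm_mult power_Suc mult.commute)
qed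

lemma norm_of_nat_powr: "norm (of_nat n powr w) = real n powr Re w"
  using norm_powr_real_powr[of "of_nat n" w] by simp

lemma gen_binomial_remainder_bound:
  fixes w :: complex
  assumes "norm w \<le> B" "1 \<le> B" "2 * B \<le> real n"
  shows "norm (of_nat (Suc n) powr w - (\<Sum>i<M. (w gchoose i) * of_nat n powr (w - of_nat i)))
           \<le> 2 * B ^ M * real n powr (Re w - M)"
proof -
  define f where "f = (\<lambda>i. (w gchoose i) * of_nat n powr (w - of_nat i))"
  define q where "q = B / real n"
  define K where "K = B ^ M * real n powr (Re w - M)"
  have n: "real n \<ge> 2" using assms by linarith
  have q: "0 < q" "q \<le> 1/2" using assms n by (auto simp: q_def field_simps)
  have "K \<ge> 0" unfolding K_def using assms by simp
  have "f sums (of_nat (Suc n) powr w)"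
    using gen_binomial_complex''[of 1 "real n" w] n by (simp add: f_def add.commute)
  then have tail: "(\<lambda>i. f (i + M)) sums (of_nat (Suc n) powr w - (\<Sum>i<M. f i))"
    by (rule sums_split_initial_segment)
  have term_bound: "norm (f (i + M)) \<le> K * q ^ i" for i
  proof -
    have "norm (f (i + M)) = norm (w gchoose (i + M)) * real n powr (Re w - real (i + M))"
      unfolding f_def by (simp add: norm_mult norm_of_nat_powr)
    also have "\<dots> \<le> B ^ (i + M) * real n powr (Re w - real (i + M))"
      by (intro mult_right_mono norm_gbinomial_le assms) auto
    also have "real n powr (Re w - real (i + M)) = real n powr (Re w - M) / real n ^ i"
      using n by (simp add: powr_diff powr_realpow [symmetric] powr_add algebra_simps)
    also have "B ^ (i + M) * (real n powr (Re w - M) / real n ^ i) = K * q ^ i"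
      unfolding K_def q_def by (simp add: power_add power_divide field_simps)
    finally show ?thesis .
  qed
  have geom: "(\<lambda>i. K * q ^ i) sums (K / (1 - q))"
    using sums_mult[OF geometric_sums, of q K] q by (simp add: field_simps)
  have "norm (of_nat (Suc n) powr w - (\<Sum>i<M. f i)) = norm (\<Sum>i. f (i + M))"
    using tail by (simp add: sums_iff)
  also have "\<dots> \<le> (\<Sum>i. K * q ^ i)"
    using geom by (intro norm_suminf_le term_bound) (simp add: sums_iff)
  also have "\<dots> = K / (1 - q)"
    using geom by (simp add: sums_iff)
  also have "\<dots> \<le> 2 * K"
    using q \<open>K \<ge> 0\<close> mult_left_mono[of "q * 2" 1 K] by (simp add: field_simps)
  finally show ?thesis unfolding f_def K_def by (simp add: mult_ac)
qed

(* Chosen so that antidiff z R n s - antidiff z R (Suc n) s = z^n n^(-s) + O(n^(-Re s - R))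
   after expanding (n+1)^(-s-r) binomially in powers of 1/n (antidiff_error_eq). *)
fun antidiff_coeff :: "complex \<Rightarrow> nat \<Rightarrow> complex \<Rightarrow> complex" where
  "antidiff_coeff z t s = (if t = 0 then 1 / (1 - z) else
     z / (1 - z) * (\<Sum>r<t. antidiff_coeff z r s * ((-s - of_nat r) gchoose (t - r))))"

declare antidiff_coeff.simps [simp del]

definition antidiff :: "complex \<Rightarrow> nat \<Rightarrow> nat \<Rightarrow> complex \<Rightarrow> complex" where
  "antidiff z R n s = z ^ n * (\<Sum>r<R. antidiff_coeff z r s * of_nat n powr (-s - of_nat r))"

definition antidiff_error :: "complex \<Rightarrow> nat \<Rightarrow> nat \<Rightarrow> complex \<Rightarrow> complex" where
  "antidiff_error z R n s = z ^ n * of_nat n powr (-s) - antidiff z R n s + antidiff z R (Suc n) s"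

lemma holomorphic_on_gbinomial [holomorphic_intros]:
  "f holomorphic_on S \<Longrightarrow> (\<lambda>s. f s gchoose k) holomorphic_on S"
  unfolding gbinomial_prod_rev by (intro holomorphic_intros) auto

lemma holomorphic_antidiff_coeff [holomorphic_intros]: "antidiff_coeff z t holomorphic_on S"
proof (induction t rule: less_induct)
  case (less t)
  show ?case
  proof (cases "t = 0")
    case False
    then have "antidiff_coeff z t =
        (\<lambda>s. z / (1 - z) * (\<Sum>r<t. antidiff_coeff z r s * ((-s - of_nat r) gchoose (t - r))))"
      by (subst antidiff_coeff.simps [abs_def]) simp
    then show ?thesis
      using False by (simp only:) (intro holomorphic_intros less, auto)
  qed (subst antidiff_coeff.simps [abs_def], simp)
qed

lemma holomorphic_antidiff [holomorphic_intros]: "antidiff z R n holomorphic_on S"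
  unfolding antidiff_def by (intro holomorphic_intros holomorphic_on_powr_right)

lemma holomorphic_antidiff_error [holomorphic_intros]: "antidiff_error z R n holomorphic_on S"
  unfolding antidiff_error_def by (intro holomorphic_intros holomorphic_on_powr_right)

lemma antidiff_coeff_fixpoint:
  assumes "z \<noteq> 1"
  shows "antidiff_coeff z t s =
    (if t = 0 then 1 else 0) + z * (\<Sum>r\<le>t. antidiff_coeff z r s * ((-s - of_nat r) gchoose (t - r)))"
proof -
  define S where "S = (\<Sum>r<t. antidiff_coeff z r s * ((-s - of_nat r) gchoose (t - r)))"
  have "1 - z \<noteq> 0" using assms by simp
  moreover have "antidiff_coeff z t s = (if t = 0 then 1 / (1 - z) else z / (1 - z) * S)"
    unfolding S_def by (subst antidiff_coeff.simps) simp
  moreover have "(\<Sum>r\<le>t. antidiff_coeff z r s * ((-s - of_nat r) gchoose (t - r))) =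
      antidiff_coeff z t s + S"
    by (simp add: S_def lessThan_Suc_atMost [symmetric])
  ultimately show ?thesis
    by (auto simp: S_def field_simps)
qed

lemma antidiff_coeff_poly_identity:
  assumes "z \<noteq> 1" "R > 0"
  shows "(\<Sum>r<R. antidiff_coeff z r s * y ^ r) =
    1 + z * (\<Sum>r<R. \<Sum>i<R - r. antidiff_coeff z r s * ((-s - of_nat r) gchoose i) * y ^ (r + i))"
proof -
  define c where "c t = (\<Sum>r\<le>t. antidiff_coeff z r s * ((-s - of_nat r) gchoose (t - r)))" for t
  have "(\<Sum>r<R. \<Sum>i<R - r. antidiff_coeff z r s * ((-s - of_nat r) gchoose i) * y ^ (r + i)) =
      (\<Sum>(r, i)\<in>{(r, i). r + i < R}. antidiff_coeff z r s * ((-s - of_nat r) gchoose i) * y ^ (r + i))"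
    by (subst sum.Sigma) (auto simp: Sigma_def intro: sum.cong)
  also have "\<dots> = (\<Sum>t<R. c t * y ^ t)"
    unfolding sum.triangle_reindex c_def by (simp add: sum_distrib_right)
  finally have "(\<Sum>r<R. \<Sum>i<R - r. antidiff_coeff z r s * ((-s - of_nat r) gchoose i) * y ^ (r + i)) =
      (\<Sum>t<R. c t * y ^ t)" .
  moreover have "antidiff_coeff z t s * y ^ t = (if t = 0 then 1 else 0) + z * (c t * y ^ t)" for t
    by (subst antidiff_coeff_fixpoint [OF assms(1)]) (simp add: c_def distrib_right)
  moreover have "(\<Sum>t<R. if t = 0 then 1 else 0 :: complex) = 1"
    using assms(2) by simp
  ultimately show ?thesis
    by (simp add: sum.distrib sum_distrib_left)
qed

lemma of_nat_powr_diff_of_nat: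
  fixes w :: complex
  assumes "n > 0"
  shows "of_nat n powr (w - of_nat k) = of_nat n powr w * (1 / of_nat n) ^ k"
proof -
  have "of_nat n powr (of_nat k :: complex) = of_nat n ^ k"
    using assms by simp
  then show ?thesis
    by (simp add: powr_diff power_divide)
qed

lemma antidiff_error_eq:
  assumes "z \<noteq> 1" "R > 0" "n > 0"
  shows "antidiff_error z R n s = z ^ Suc n * (\<Sum>r<R. antidiff_coeff z r s *
     (of_nat (Suc n) powr (-s - of_nat r) -
       (\<Sum>i<R - r. ((-s - of_nat r) gchoose i) * of_nat n powr (-s - of_nat r - of_nat i))))"
proof -
  define P where "P = (of_nat n powr (-s) :: complex)"
  define y where "y = 1 / (of_nat n :: complex)"
  define D where "D = (\<Sum>r<R. \<Sum>i<R - r. antidiff_coeff z r s * ((-s - of_nat r) gchoose i) * y ^ (r + i))"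
  have powr_eq: "of_nat n powr (-s - of_nat k) = P * y ^ k" for k
    unfolding P_def y_def by (rule of_nat_powr_diff_of_nat [OF assms(3)])
  have "antidiff z R n s = z ^ n * P * (1 + z * D)"
    unfolding antidiff_def antidiff_coeff_poly_identity [OF assms(1,2), symmetric] D_def
    by (simp add: powr_eq sum_distrib_left mult_ac)
  moreover have "(\<Sum>r<R. antidiff_coeff z r s *
       (\<Sum>i<R - r. ((-s - of_nat r) gchoose i) * of_nat n powr (-s - of_nat r - of_nat i))) = P * D"
    unfolding D_def
    by (simp add: diff_diff_add powr_eq sum_distrib_left power_add flip: of_nat_add)
       (simp add: mult_ac)
  ultimately show ?thesis
    unfolding antidiff_error_def antidiff_def [of z R "Suc n"] P_def
    by (simp add: right_diff_distrib sum_subtractf algebra_simps)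
qed

lemma antidiff_coeff_bounded: "\<exists>G. \<forall>r s. norm s \<le> B \<longrightarrow> norm (antidiff_coeff z r s) \<le> G r"
proof -
  have "bounded (antidiff_coeff z r ` cball 0 B)" for r
    by (intro compact_imp_bounded compact_continuous_image holomorphic_on_imp_continuous_on
        holomorphic_antidiff_coeff compact_cball)
  then have "\<forall>r. \<exists>G. \<forall>s. norm s \<le> B \<longrightarrow> norm (antidiff_coeff z r s) \<le> G"
    by (force simp: bounded_iff)
  then show ?thesis by metis
qed

lemma antidiff_error_bound:
  assumes "norm z = 1" "z \<noteq> 1" "R > 0"
  shows "\<exists>C n0. \<forall>n\<ge>n0. \<forall>s. norm s \<le> B \<longrightarrow>
           norm (antidiff_error z R n s) \<le> C * real n powr (- Re s - R)"
proof -
  obtain G where G: "\<And>r s. norm s \<le> B \<Longrightarrow> norm (antidiff_coeff z r s) \<le> G r"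
    using antidiff_coeff_bounded by blast
  define B' where "B' = max B 0 + R + 1"
  define C where "C = (\<Sum>r<R. max (G r) 0 * (2 * B' ^ (R - r)))"
  have "norm (antidiff_error z R n s) \<le> C * real n powr (- Re s - R)"
    if n: "2 * B' \<le> real n" and s: "norm s \<le> B" for n s
  proof -
    define rem where "rem r = of_nat (Suc n) powr (-s - of_nat r) -
       (\<Sum>i<R - r. ((-s - of_nat r) gchoose i) * of_nat n powr (-s - of_nat r - of_nat i))" for r
    have "B' \<ge> 1" by (simp add: B'_def)
    have rem_bound: "norm (rem r) \<le> 2 * B' ^ (R - r) * real n powr (- Re s - R)" if "r < R" for r
    proof -
      have "norm (-s - of_nat r) \<le> norm s + r"
        using norm_triangle_ineq4[of "-s" "of_nat r"] by simp
      then have "norm (-s - of_nat r) \<le> B'"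
        using s that by (simp add: B'_def)
      from gen_binomial_remainder_bound [OF this \<open>B' \<ge> 1\<close> n, of "R - r"]
      show ?thesis
        using that by (simp add: rem_def of_nat_diff)
    qed
    have "n > 0" using n \<open>B' \<ge> 1\<close> by simp
    then have "norm (antidiff_error z R n s) = norm (\<Sum>r<R. antidiff_coeff z r s * rem r)"
      using assms by (simp add: antidiff_error_eq rem_def norm_mult norm_power)
    also have "\<dots> \<le> (\<Sum>r<R. norm (antidiff_coeff z r s) * norm (rem r))"
      using norm_sum [of "\<lambda>r. antidiff_coeff z r s * rem r" "{..<R}"] by (simp add: norm_mult)
    also have "\<dots> \<le> (\<Sum>r<R. max (G r) 0 * (2 * B' ^ (R - r) * real n powr (- Re s - R)))"
      using G [OF s] by (intro sum_mono mult_mono rem_bound) (auto intro: max.coboundedI1)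
    also have "\<dots> = C * real n powr (- Re s - R)"
      unfolding C_def by (simp add: sum_distrib_right mult.assoc)
    finally show ?thesis .
  qed
  then show ?thesis
    by (intro exI [of _ C] exI [of _ "nat \<lceil>2 * B'\<rceil>"]) (auto simp: nat_le_iff ceiling_le_iff)
qed

section \<open>Analytic continuation\<close>

definition antidiff_error_tail :: "complex \<Rightarrow> nat \<Rightarrow> nat \<Rightarrow> complex \<Rightarrow> complex" where
  "antidiff_error_tail z R N s = (\<Sum>i. antidiff_error z R (i + N) s)"

definition Li_star_repr :: "complex \<Rightarrow> nat \<Rightarrow> nat \<Rightarrow> complex \<Rightarrow> complex" where
  "Li_star_repr z R N s = antidiff z R N s + antidiff_error_tail z R N s"

lemma antidiff_error_bound_uniform:
  assumes "norm z = 1" "z \<noteq> 1" "R > 0"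
  shows "\<exists>C n0. \<forall>n\<ge>n0. \<forall>s. norm s \<le> B \<longrightarrow> A + 2 \<le> Re s + R \<longrightarrow>
           norm (antidiff_error z R n s) \<le> C * real n powr (- A - 2)"
proof -
  obtain C n0 where C: "\<And>n s. n \<ge> n0 \<Longrightarrow> norm s \<le> B \<Longrightarrow>
      norm (antidiff_error z R n s) \<le> C * real n powr (- Re s - R)"
    using antidiff_error_bound [OF assms] by blast
  have "norm (antidiff_error z R n s) \<le> max C 0 * real n powr (- A - 2)"
    if "n \<ge> max n0 1" "norm s \<le> B" "A + 2 \<le> Re s + R" for n s
  proof -
    have "norm (antidiff_error z R n s) \<le> max C 0 * real n powr (- Re s - R)"
      using C [of n s] that by (simp add: max_mult_distrib_right)
    also have "\<dots> \<le> max C 0 * real n powr (- A - 2)"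
      using that by (intro mult_left_mono powr_mono) auto
    finally show ?thesis .
  qed
  then show ?thesis by blast
qed

lemma summable_shifted_powr: "a < -1 \<Longrightarrow> summable (\<lambda>i. real (i + N) powr a)"
  using summable_iff_shift [of "\<lambda>n. real n powr a" N] by (simp add: summable_real_powr_iff)

lemma holomorphic_antidiff_error_tail:
  fixes B :: real
  assumes "norm z = 1" "z \<noteq> 1" "0 \<le> B" "B + 2 \<le> R"
  shows "antidiff_error_tail z R N holomorphic_on ball 0 B"
proof -
  have "R > 0"
    using assms(3,4) by linarith
  then obtain C n0 where C: "\<And>n s. n \<ge> n0 \<Longrightarrow> norm s \<le> B \<Longrightarrow> 2 \<le> Re s + R \<Longrightarrow>
      norm (antidiff_error z R n s) \<le> C * real n powr (-2)"
    using antidiff_error_bound_uniform [OF assms(1,2), of R B 0] by auto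
  have "\<forall>\<^sub>F i in sequentially. \<forall>s\<in>cball 0 B. norm (antidiff_error z R (i + N) s) \<le> C * real (i + N) powr (-2)"
  proof (intro eventually_sequentiallyI ballI)
    fix i s assume "n0 \<le> i" "s \<in> cball (0 :: complex) B"
    moreover have "- Re s \<le> norm s" using abs_Re_le_cmod [of s] by linarith
    ultimately show "norm (antidiff_error z R (i + N) s) \<le> C * real (i + N) powr (-2)"
      using C [of "i + N" s] assms(4) by simp
  qed
  then have "uniform_limit (cball 0 B) (\<lambda>n s. \<Sum>i<n. antidiff_error z R (i + N) s)
      (antidiff_error_tail z R N) sequentially"
    unfolding antidiff_error_tail_def [abs_def]
    by (rule Weierstrass_m_test_ev) (intro summable_mult summable_shifted_powr, simp)
  then show ?thesis
    by (elim holomorphic_uniform_limit [rotated])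
       (auto intro!: always_eventually holomorphic_on_imp_continuous_on holomorphic_intros)
qed

lemma holomorphic_Li_star_repr:
  fixes B :: real
  assumes "norm z = 1" "z \<noteq> 1" "0 \<le> B" "B + 2 \<le> R"
  shows "Li_star_repr z R N holomorphic_on ball 0 B"
  unfolding Li_star_repr_def [abs_def]
  by (intro holomorphic_intros holomorphic_antidiff_error_tail [OF assms])

lemma antidiff_tendsto_zero:
  assumes "norm z = 1" "Re s > 0"
  shows "(\<lambda>i. antidiff z R (i + N) s) \<longlonglongrightarrow> 0"
proof -
  have "filterlim (\<lambda>i. real (i + N)) at_top sequentially"
    by (intro filterlim_compose [OF filterlim_real_sequentially] filterlim_add_const_nat_at_top)
  then have "(\<lambda>i. real (i + N) powr (- Re s - r)) \<longlonglongrightarrow> 0" for r :: nat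
    by (rule tendsto_neg_powr [rotated]) (use assms in simp)
  then have "(\<lambda>i. norm (antidiff_coeff z r s) * real (i + N) powr (- Re s - r)) \<longlonglongrightarrow> 0" for r
    by (rule tendsto_mult_right_zero)
  then have "(\<lambda>i. norm (antidiff_coeff z r s * of_nat (i + N) powr (-s - of_nat r))) \<longlonglongrightarrow> 0" for r
    by (simp only: norm_mult norm_of_nat_powr) simp
  then have "(\<lambda>i. antidiff_coeff z r s * of_nat (i + N) powr (-s - of_nat r)) \<longlonglongrightarrow> 0" for r
    by (rule tendsto_norm_zero_cancel)
  then have "(\<lambda>i. \<Sum>r<R. antidiff_coeff z r s * of_nat (i + N) powr (-s - of_nat r)) \<longlonglongrightarrow> 0"
    by (intro tendsto_null_sum)
  then have "(\<lambda>i. norm (\<Sum>r<R. antidiff_coeff z r s * of_nat (i + N) powr (-s - of_nat r))) \<longlonglongrightarrow> 0"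
    by (rule tendsto_norm_zero)
  then have "(\<lambda>i. norm (antidiff z R (i + N) s)) \<longlonglongrightarrow> 0"
    unfolding antidiff_def using assms(1) by (simp add: norm_mult norm_power)
  then show ?thesis
    by (rule tendsto_norm_zero_cancel)
qed

lemma Li_star_repr_eq_series:
  assumes "norm z = 1" "Re s > 1"
  shows "Li_star_repr z R N s = (\<Sum>i. z ^ (i + N) / of_nat (i + N) powr s)"
proof -
  define a where "a i = z ^ (i + N) * of_nat (i + N) powr (-s)" for i
  have "norm (a i) = real (i + N) powr (- Re s)" for i
    unfolding a_def using assms(1) by (simp add: norm_mult norm_power norm_of_nat_powr del: of_nat_add)
  moreover have "summable (\<lambda>i. real (i + N) powr (- Re s))"
    using assms(2) by (intro summable_shifted_powr) simp
  ultimately have "summable (\<lambda>i. norm (a i))"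
    by simp
  then have "summable a"
    by (rule summable_norm_cancel)
  moreover have "(\<lambda>i. antidiff z R (i + N) s) \<longlonglongrightarrow> 0"
    using assms by (intro antidiff_tendsto_zero) simp_all
  then have "(\<lambda>i. antidiff z R (i + N) s - antidiff z R (Suc i + N) s) sums antidiff z R N s"
    using telescope_sums' by fastforce
  ultimately have "(\<lambda>i. a i - (antidiff z R (i + N) s - antidiff z R (Suc i + N) s)) sums
      ((\<Sum>i. a i) - antidiff z R N s)"
    by (intro sums_diff) (simp_all add: summable_sums)
  moreover have "a i - (antidiff z R (i + N) s - antidiff z R (Suc i + N) s) = antidiff_error z R (i + N) s" for i
    by (simp add: a_def antidiff_error_def)
  ultimately have "Li_star_repr z R N s = (\<Sum>i. a i)"
    unfolding Li_star_repr_def antidiff_error_tail_def by (simp add: sums_iff)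
  then show ?thesis
    by (simp add: a_def powr_minus_divide)
qed

lemma Li_star_repr_agree:
  assumes "norm z = 1" "z \<noteq> 1" "4 \<le> R" "4 \<le> R'" "norm s + 2 < R" "norm s + 2 < R'"
  shows "Li_star_repr z R N s = Li_star_repr z R' N s"
proof -
  define b :: real where "b = min R R' - 2"
  have "2 \<le> b" using assms(3,4) by (simp add: b_def)
  show ?thesis
  proof (rule analytic_continuation_open
      [of "ball (3/2) (1/4)" "ball 0 b" "Li_star_repr z R N" "Li_star_repr z R' N" s])
    show "ball (3/2) (1/4) \<subseteq> ball (0 :: complex) b"
    proof
      fix y :: complex assume "y \<in> ball (3/2) (1/4)"
      then have "norm y < 3/2 + 1/4"
        using norm_triangle_ineq2 [of y "3/2"] by (simp add: dist_norm norm_minus_commute)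
      with \<open>2 \<le> b\<close> show "y \<in> ball 0 b" by simp
    qed
    show "Li_star_repr z R N holomorphic_on ball 0 b" "Li_star_repr z R' N holomorphic_on ball 0 b"
      using assms(1-4) \<open>2 \<le> b\<close> by (auto simp: b_def intro!: holomorphic_Li_star_repr)
    show "s \<in> ball 0 b"
      using assms(5,6) by (simp add: b_def)
    show "Li_star_repr z R N y = Li_star_repr z R' N y" if "y \<in> ball (3/2) (1/4)" for y
    proof -
      have "Re y > 1"
        using that abs_Re_le_cmod [of "y - 3/2"] by (simp add: dist_norm norm_minus_commute)
      then show ?thesis
        using assms(1) by (simp add: Li_star_repr_eq_series)
    qed
    show "open (ball (3/2 :: complex) (1/4))" "open (ball (0 :: complex) b)"
      "connected (ball (0 :: complex) b)"
      by auto
    show "ball (3/2 :: complex) (1/4) \<noteq> {}"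
      by simp
  qed
qed

(* By Li_star_repr_agree any R \<ge> 4 with norm s + 2 < R gives the same value. *)
definition Li_star_cont :: "complex \<Rightarrow> nat \<Rightarrow> complex \<Rightarrow> complex" where
  "Li_star_cont z N s = Li_star_repr z (nat \<lceil>norm s\<rceil> + 4) N s"

lemma Li_star_cont_eq_repr:
  assumes "norm z = 1" "z \<noteq> 1" "4 \<le> R" "norm s + 2 < R"
  shows "Li_star_cont z N s = Li_star_repr z R N s"
  unfolding Li_star_cont_def using assms by (intro Li_star_repr_agree) linarith+

lemma holomorphic_Li_star_cont:
  assumes "norm z = 1" "z \<noteq> 1"
  shows "Li_star_cont z N holomorphic_on UNIV"
proof -
  have "Li_star_cont z N field_differentiable at x" for x
  proof -
    define R where "R = nat \<lceil>norm x\<rceil> + 4"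
    have "norm x < 2 + \<lceil>norm x\<rceil>"
      using le_of_int_ceiling [of "norm x"] by linarith
    moreover have "(0 :: real) \<le> \<lceil>norm x\<rceil>"
      using norm_ge_zero [of x] by (simp del: norm_ge_zero)
    ultimately have "Li_star_repr z R N holomorphic_on ball 0 (real R - 2)"
      by (intro holomorphic_Li_star_repr assms) (simp_all add: R_def)
    moreover have "Li_star_repr z R N y = Li_star_cont z N y" if "y \<in> ball 0 (real R - 2)" for y
      using that by (intro Li_star_cont_eq_repr [symmetric] assms) (simp_all add: R_def)
    ultimately have "Li_star_cont z N holomorphic_on ball 0 (real R - 2)"
      by (rule holomorphic_transform)
    moreover have "x \<in> ball 0 (real R - 2)"
      using \<open>norm x < 2 + \<lceil>norm x\<rceil>\<close> by (simp add: R_def)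
    ultimately show ?thesis
      by (intro holomorphic_on_imp_differentiable_at) auto
  qed
  then show ?thesis
    by (simp add: holomorphic_on_def field_differentiable_at_within)
qed

lemma Li_star_eq_cont:
  assumes "norm z = 1" "z \<noteq> 1"
  shows "Li_star z N = Li_star_cont z N"
  unfolding Li_star_def
proof (rule the_equality)
  have "Li_star_cont z N s = (\<Sum>i. z ^ (i + N) / of_nat (i + N) powr s)" if "1 < Re s" for s
  proof -
    have "Li_star_cont z N s = Li_star_repr z (nat \<lceil>norm s\<rceil> + 4) N s"
      by (rule Li_star_cont_def)
    also have "\<dots> = (\<Sum>i. z ^ (i + N) / of_nat (i + N) powr s)"
      using assms(1) that by (rule Li_star_repr_eq_series)
    finally show ?thesis .
  qed
  with holomorphic_Li_star_cont [OF assms]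
  show "Li_star_cont z N holomorphic_on UNIV \<and>
      (\<forall>s. 1 < Re s \<longrightarrow> Li_star_cont z N s = (\<Sum>i. z ^ (i + N) / of_nat (i + N) powr s))"
    by blast
  fix f assume f: "f holomorphic_on UNIV \<and>
      (\<forall>s. 1 < Re s \<longrightarrow> f s = (\<Sum>i. z ^ (i + N) / of_nat (i + N) powr s))"
  show "f = Li_star_cont z N"
  proof
    fix w
    show "f w = Li_star_cont z N w"
    proof (rule analytic_continuation_open [of "{s. 1 < Re s}" UNIV f "Li_star_cont z N" w])
      show "{s. 1 < Re s} \<noteq> {}"
        by (auto intro!: exI [of _ 2])
      show "f y = Li_star_cont z N y" if "y \<in> {s. 1 < Re s}" for y
        using f that \<open>\<And>s. 1 < Re s \<Longrightarrow> Li_star_cont z N s = _\<close> by auto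
    qed (use f holomorphic_Li_star_cont [OF assms] open_halfspace_Re_gt in auto)
  qed
qed

lemma Li_star_eq_repr:
  assumes "norm z = 1" "z \<noteq> 1" "4 \<le> R" "norm s + 2 < R"
  shows "Li_star z N s = Li_star_repr z R N s"
  using assms by (simp add: Li_star_eq_cont Li_star_cont_eq_repr)

section \<open>Taylor coefficients\<close>

lemma taylor_coeff_add:
  assumes "f holomorphic_on S" "g holomorphic_on S" "open S" "c \<in> S"
  shows "taylor_coeff (\<lambda>s. f s + g s) c k = taylor_coeff f c k + taylor_coeff g c k"
  using higher_deriv_add [OF assms] by (simp add: taylor_coeff_def add_divide_distrib)

lemma taylor_coeff_sum:
  assumes "finite I" "\<And>i. i \<in> I \<Longrightarrow> f i holomorphic_on S" "open S" "c \<in> S"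
  shows "taylor_coeff (\<lambda>s. \<Sum>i\<in>I. f i s) c k = (\<Sum>i\<in>I. taylor_coeff (f i) c k)"
  using assms(1,2)
proof (induction I rule: finite_induct)
  case empty
  then show ?case by (simp add: taylor_coeff_def higher_deriv_const)
next
  case (insert j I)
  have "taylor_coeff (\<lambda>s. f j s + (\<Sum>i\<in>I. f i s)) c k =
      taylor_coeff (f j) c k + taylor_coeff (\<lambda>s. \<Sum>i\<in>I. f i s) c k"
    using insert assms(3,4) by (intro taylor_coeff_add holomorphic_on_sum) auto
  with insert show ?case
    by simp
qed

lemma taylor_coeff_cmult:
  assumes "f holomorphic_on S" "open S" "c \<in> S"
  shows "taylor_coeff (\<lambda>s. a * f s) c k = a * taylor_coeff f c k"
  using higher_deriv_cmult [OF assms(1,3,2)] by (simp add: taylor_coeff_def)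

lemma taylor_coeff_mult:
  assumes "f holomorphic_on S" "g holomorphic_on S" "open S" "c \<in> S"
  shows "taylor_coeff (\<lambda>s. f s * g s) c k = (\<Sum>i\<le>k. taylor_coeff f c i * taylor_coeff g c (k - i))"
proof -
  have "of_nat (k choose i) / fact k = 1 / (fact i * fact (k - i) :: complex)" if "i \<le> k" for i
    using that by (simp add: binomial_fact)
  then show ?thesis
    unfolding taylor_coeff_def higher_deriv_mult [OF assms] atLeast0AtMost sum_divide_distrib
    by (intro sum.cong refl) (simp add: field_simps)
qed

lemma higher_deriv_powr_minus:
  fixes c b :: complex
  assumes "c \<noteq> 0"
  shows "(deriv ^^ j) (\<lambda>s. c powr (-s - b)) = (\<lambda>s. (- ln c) ^ j * c powr (-s - b))"
proof (induction j)
  case (Suc j)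
  have "((\<lambda>s. (- ln c) ^ j * exp ((-s - b) * ln c)) has_field_derivative
      (- ln c) ^ Suc j * exp ((-s - b) * ln c)) (at s)" for s
    by (auto intro!: derivative_eq_intros simp: algebra_simps)
  then show ?case
    using Suc assms by (auto simp: powr_def intro!: DERIV_imp_deriv)
qed simp

lemma taylor_coeff_of_nat_powr:
  assumes "n > 0"
  shows "taylor_coeff (\<lambda>s. of_nat n powr (-s - b)) c k =
    (- ln (of_nat n)) ^ k / fact k * of_nat n powr (-c - b)"
  using assms by (simp add: taylor_coeff_def higher_deriv_powr_minus)

lemma taylor_coeff_antidiff:
  assumes "n > 0"
  shows "taylor_coeff (antidiff z R n) c k = z ^ n * (\<Sum>r<R. \<Sum>i\<le>k.
    taylor_coeff (antidiff_coeff z r) c i * ((- ln (of_nat n)) ^ (k - i) / fact (k - i) * of_nat n powr (-c - of_nat r)))"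
proof -
  have "taylor_coeff (antidiff z R n) c k =
      z ^ n * (\<Sum>r<R. taylor_coeff (\<lambda>s. antidiff_coeff z r s * of_nat n powr (-s - of_nat r)) c k)"
    unfolding antidiff_def [abs_def]
    by (subst taylor_coeff_cmult [of _ UNIV], simp_all add: holomorphic_intros holomorphic_on_powr_right)
       (subst taylor_coeff_sum [of _ _ UNIV], auto intro!: holomorphic_intros holomorphic_on_powr_right)
  also have "\<dots> = z ^ n * (\<Sum>r<R. \<Sum>i\<le>k. taylor_coeff (antidiff_coeff z r) c i *
      ((- ln (of_nat n)) ^ (k - i) / fact (k - i) * of_nat n powr (-c - of_nat r)))"
    using assms
    by (subst taylor_coeff_mult [of _ UNIV])
       (auto intro!: holomorphic_intros holomorphic_on_powr_right simp: taylor_coeff_of_nat_powr)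
  finally show ?thesis .
qed

definition comparison_scale :: "nat \<Rightarrow> int \<Rightarrow> nat \<Rightarrow> complex" where
  "comparison_scale l m n = of_real (ln (real n) ^ l * real n powr (- real_of_int m))"

(* The coefficient of z^n (ln n)^l n^(-m) in the k-th Taylor coefficient of antidiff at a,
   for l \<le> k and a \<le> m; the exponent m = a + r comes from antidiff_coeff z r. *)
definition Li_star_exp_coeff :: "complex \<Rightarrow> int \<Rightarrow> nat \<Rightarrow> nat \<Rightarrow> int \<Rightarrow> complex" where
  "Li_star_exp_coeff z a k l m =
     (-1) ^ l * taylor_coeff (antidiff_coeff z (nat (m - a))) (of_int a) (k - l) / fact l"

lemma taylor_coeff_antidiff_eq:
  assumes "n > 0"
  shows "taylor_coeff (antidiff z R n) (of_int a) k =
    (\<Sum>(l, m)\<in>{..k} \<times> {a..<a + int R}. z ^ n * Li_star_exp_coeff z a k l m * comparison_scale l m n)"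
proof -
  have "taylor_coeff (antidiff z R n) (of_int a) k =
      (\<Sum>(r, i)\<in>{..<R} \<times> {..k}. z ^ n * (taylor_coeff (antidiff_coeff z r) (of_int a) i *
        ((- ln (of_nat n)) ^ (k - i) / fact (k - i) * of_nat n powr (- of_int a - of_nat r))))"
    by (simp add: taylor_coeff_antidiff [OF assms] sum.cartesian_product [symmetric] sum_distrib_left)
  also have "\<dots> = (\<Sum>(l, m)\<in>{..k} \<times> {a..<a + int R}. z ^ n * Li_star_exp_coeff z a k l m * comparison_scale l m n)"
  proof (rule sum.reindex_bij_witness [where j = "\<lambda>(r, i). (k - i, a + int r)" and i = "\<lambda>(l, m). (nat (m - a), k - l)"])
    fix p assume "p \<in> {..<R} \<times> {..k}"
    then obtain r i where p: "p = (r, i)" "r < R" "i \<le> k" by auto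
    have "(of_nat n :: complex) powr (- of_int a - of_nat r) = of_real (real n powr (- real_of_int (a + int r)))"
      by (subst powr_of_real [symmetric]) simp_all
    moreover have "ln (of_nat n :: complex) = of_real (ln (real n))"
      using assms by simp
    ultimately show "(case (case p of (r, i) \<Rightarrow> (k - i, a + int r)) of (l, m) \<Rightarrow>
          z ^ n * Li_star_exp_coeff z a k l m * comparison_scale l m n) =
        (case p of (r, i) \<Rightarrow> z ^ n * (taylor_coeff (antidiff_coeff z r) (of_int a) i *
          ((- ln (of_nat n)) ^ (k - i) / fact (k - i) * of_nat n powr (- of_int a - of_nat r))))"
      using p by (simp add: Li_star_exp_coeff_def comparison_scale_def power_minus [of "of_real (ln (real n))"])
  qed auto
  finally show ?thesis .
qed

lemma taylor_coeff_Li_star_decomp: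
  assumes "norm z = 1" "z \<noteq> 1" "4 \<le> R" "norm c + 2 < R"
  shows "taylor_coeff (Li_star z n) c k =
    taylor_coeff (antidiff z R n) c k + taylor_coeff (antidiff_error_tail z R n) c k"
proof -
  define S where "S = ball (0 :: complex) (real R - 2)"
  have "open S" "c \<in> S"
    using assms(4) by (simp_all add: S_def)
  have "\<forall>\<^sub>F s in nhds c. Li_star z n s = antidiff z R n s + antidiff_error_tail z R n s"
    using eventually_nhds_in_open [OF \<open>open S\<close> \<open>c \<in> S\<close>]
    by eventually_elim (use assms in \<open>simp add: S_def Li_star_eq_repr Li_star_repr_def\<close>)
  then have "taylor_coeff (Li_star z n) c k =
      taylor_coeff (\<lambda>s. antidiff z R n s + antidiff_error_tail z R n s) c k"
    unfolding taylor_coeff_def by (simp add: higher_deriv_cong_ev)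
  also have "\<dots> = taylor_coeff (antidiff z R n) c k + taylor_coeff (antidiff_error_tail z R n) c k"
    using assms(3) \<open>c \<in> S\<close> holomorphic_antidiff_error_tail [OF assms(1,2), of "R - 2" R]
    by (intro taylor_coeff_add [OF _ _ \<open>open S\<close>] holomorphic_intros) (simp_all add: S_def)
  finally show ?thesis .
qed

lemma antidiff_error_tail_bound:
  assumes "norm z = 1" "z \<noteq> 1" "R > 0" "0 \<le> A"
  shows "\<exists>K n0. \<forall>n\<ge>n0. \<forall>s. norm s \<le> B \<longrightarrow> A + 2 \<le> Re s + R \<longrightarrow>
           norm (antidiff_error_tail z R n s) \<le> K * real n powr (- A)"
proof -
  obtain C n0 where C: "\<And>n s. n \<ge> n0 \<Longrightarrow> norm s \<le> B \<Longrightarrow> A + 2 \<le> Re s + R \<Longrightarrow>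
      norm (antidiff_error z R n s) \<le> C * real n powr (- A - 2)"
    using antidiff_error_bound_uniform [OF assms(1-3)] by blast
  define Z where "Z = (\<Sum>i. real (i + 1) powr (-2))"
  have summable: "summable (\<lambda>i. real (i + 1) powr (-2))"
    by (intro summable_shifted_powr) simp
  have "norm (antidiff_error_tail z R n s) \<le> max C 0 * Z * real n powr (- A)"
    if n: "n \<ge> max n0 1" and s: "norm s \<le> B" "A + 2 \<le> Re s + R" for n s
  proof -
    have "norm (antidiff_error z R (i + n) s) \<le> max C 0 * real n powr (- A) * real (i + 1) powr (-2)" for i
    proof -
      have "norm (antidiff_error z R (i + n) s) \<le> max C 0 * real (i + n) powr (- A - 2)"
        using C [of "i + n" s] n s by (simp add: max_mult_distrib_right)
      also have "\<dots> = max C 0 * (real (i + n) powr (- A) * real (i + n) powr (-2))"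
        by (simp add: powr_add [symmetric])
      also have "\<dots> \<le> max C 0 * (real n powr (- A) * real (i + 1) powr (-2))"
        using n assms(4) by (intro mult_left_mono mult_mono powr_mono2') auto
      finally show ?thesis by (simp add: mult_ac)
    qed
    then have "norm (antidiff_error_tail z R n s) \<le> (\<Sum>i. max C 0 * real n powr (- A) * real (i + 1) powr (-2))"
      unfolding antidiff_error_tail_def using summable
      by (intro norm_suminf_le) (simp_all add: summable_mult)
    also have "\<dots> = max C 0 * Z * real n powr (- A)"
      unfolding Z_def using summable by (simp add: suminf_mult mult_ac)
    finally show ?thesis .
  qed
  then show ?thesis by blast
qed

lemma norm_taylor_coeff_le:
  assumes "f holomorphic_on cball c r" "0 < r" "\<And>s. norm (c - s) = r \<Longrightarrow> norm (f s) \<le> M"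
  shows "norm (taylor_coeff f c k) \<le> M / r ^ k"
proof -
  have "norm ((deriv ^^ k) f c) \<le> fact k * M / r ^ k"
    using assms by (intro Cauchy_inequality holomorphic_on_imp_continuous_on)
       (auto elim: holomorphic_on_subset)
  then show ?thesis
    by (simp add: taylor_coeff_def norm_divide field_simps)
qed

lemma taylor_coeff_antidiff_error_tail_bigo:
  assumes "norm z = 1" "z \<noteq> 1" "0 \<le> A" "norm c + 3 < R" "A + 3 \<le> Re c + R"
  shows "(\<lambda>n. taylor_coeff (antidiff_error_tail z R n) c k) \<in> O(\<lambda>n. of_real (real n powr (- A)))"
proof -
  have "3 < real R"
    using assms(4) norm_ge_zero [of c] by linarith
  obtain K n0 where K: "\<And>n s. n \<ge> n0 \<Longrightarrow> norm s \<le> norm c + 1 \<Longrightarrow> A + 2 \<le> Re s + R \<Longrightarrow>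
      norm (antidiff_error_tail z R n s) \<le> K * real n powr (- A)"
  proof -
    have "R > 0"
      using \<open>3 < real R\<close> by simp
    from antidiff_error_tail_bound [OF assms(1,2) this assms(3), of "norm c + 1"]
    show thesis using that by blast
  qed
  have "cball c 1 \<subseteq> ball 0 (real R - 2)"
  proof
    fix s assume "s \<in> cball c 1"
    then have "norm s \<le> norm c + 1"
      using norm_triangle_ineq2 [of s c] by (simp add: dist_norm norm_minus_commute)
    with assms(4) show "s \<in> ball 0 (real R - 2)" by simp
  qed
  then have holo: "antidiff_error_tail z R n holomorphic_on cball c 1" for n
    using \<open>3 < real R\<close>
    by (intro holomorphic_on_subset [OF holomorphic_antidiff_error_tail [OF assms(1,2)]]) auto
  have "norm (taylor_coeff (antidiff_error_tail z R n) c k) \<le> K * real n powr (- A)" if "n \<ge> n0" for n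
  proof (rule order.trans [OF norm_taylor_coeff_le [OF holo]])
    fix s assume s: "norm (c - s) = 1"
    then have "norm s \<le> norm c + 1"
      using norm_triangle_ineq2 [of s c] by (simp add: norm_minus_commute)
    moreover have "Re c - 1 \<le> Re s"
      using abs_Re_le_cmod [of "c - s"] s by simp
    ultimately show "norm (antidiff_error_tail z R n s) \<le> K * real n powr (- A)"
      using assms(5) that by (intro K) auto
  qed simp_all
  then show ?thesis
    by (intro bigoI [of _ K] eventually_sequentiallyI [of n0]) simp
qed

lemma powr_bigo_powr_sequentially:
  assumes "p \<le> q"
  shows "(\<lambda>n. of_real (real n powr p) :: complex) \<in> O(\<lambda>n. of_real (real n powr q))"
  unfolding landau_o.big.of_real_iff using assms
  by (subst powr_bigo_iff) (simp_all add: filterlim_real_sequentially)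

lemma geometric_comparison_scale_bigo:
  assumes "norm z = 1" "A < m"
  shows "(\<lambda>n. z ^ n * c * comparison_scale l m n) \<in> O(\<lambda>n. of_real (real n powr (- real_of_int A)))"
proof -
  have "(\<lambda>x. ln x ^ l * x powr (- real_of_int m)) \<in> O(\<lambda>x. x powr (- real_of_int A))"
    using assms(2) by real_asymp
  then have "comparison_scale l m \<in> O(\<lambda>n. of_real (real n powr (- real_of_int A)))"
    unfolding comparison_scale_def [abs_def] landau_o.big.of_real_iff
    by (rule bigo_real_nat_transfer)
  moreover have "(\<lambda>n. z ^ n * c * comparison_scale l m n) \<in> O(comparison_scale l m)"
    using assms(1) by (intro bigoI [of _ "norm c"]) (simp add: norm_mult norm_power)
  ultimately show ?thesis
    by (rule landau_o.big_trans [rotated])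
qed
lemma taylor_coeff_Li_star_expansion:
  assumes "norm z = 1" "z \<noteq> 1"
  shows "(\<lambda>n. taylor_coeff (Li_star z n) (of_int a) k -
      (\<Sum>(l, m)\<in>{..k} \<times> {a..A}. z ^ n * Li_star_exp_coeff z a k l m * comparison_scale l m n))
    \<in> O(\<lambda>n. of_real (real n powr (- real_of_int A)))"
proof -
  define R where "R = nat (\<bar>a\<bar> + max A 0 + 4)"
  define T where "T n p = z ^ n * Li_star_exp_coeff z a k (fst p) (snd p) * comparison_scale (fst p) (snd p) n"
    for n p
  define box where "box = {..k} \<times> {a..<a + int R}"
  have R: "4 \<le> R" "norm (of_int a :: complex) + 3 < R" "real_of_int (max A 0) + 3 \<le> Re (of_int a) + R" "A < a + R"
    by (simp_all add: R_def)
  have "finite box" by (simp add: box_def)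
  have "box \<inter> {p. snd p \<le> A} = {..k} \<times> {a..A}"
    using R(4) by (auto simp: box_def)
  then have split: "(\<Sum>p\<in>box. T n p) = (\<Sum>p\<in>{..k} \<times> {a..A}. T n p) + (\<Sum>p\<in>box - {p. snd p \<le> A}. T n p)"
    for n using sum.Int_Diff [OF \<open>finite box\<close>] by metis
  have "(\<lambda>n. taylor_coeff (antidiff_error_tail z R n) (of_int a) k) \<in>
      O(\<lambda>n. of_real (real n powr (- real_of_int (max A 0))))"
    using R by (intro taylor_coeff_antidiff_error_tail_bigo assms) simp_all
  also have "(\<lambda>n. of_real (real n powr (- real_of_int (max A 0))) :: complex) \<in> O(\<lambda>n. of_real (real n powr (- real_of_int A)))"
    by (rule powr_bigo_powr_sequentially) simp
  finally have tail: "(\<lambda>n. taylor_coeff (antidiff_error_tail z R n) (of_int a) k) \<in>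
      O(\<lambda>n. of_real (real n powr (- real_of_int A)))" .
  have "(\<lambda>n. \<Sum>p\<in>box - {p. snd p \<le> A}. T n p) \<in> O(\<lambda>n. of_real (real n powr (- real_of_int A)))"
    unfolding T_def using assms(1) by (intro big_sum_in_bigo geometric_comparison_scale_bigo) auto
  with tail have "(\<lambda>n. taylor_coeff (antidiff_error_tail z R n) (of_int a) k + (\<Sum>p\<in>box - {p. snd p \<le> A}. T n p))
      \<in> O(\<lambda>n. of_real (real n powr (- real_of_int A)))"
    by (rule sum_in_bigo)
  moreover have "\<forall>\<^sub>F n in sequentially. taylor_coeff (antidiff_error_tail z R n) (of_int a) k + (\<Sum>p\<in>box - {p. snd p \<le> A}. T n p) =
      taylor_coeff (Li_star z n) (of_int a) k -
      (\<Sum>(l, m)\<in>{..k} \<times> {a..A}. z ^ n * Li_star_exp_coeff z a k l m * comparison_scale l m n)"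
    using eventually_gt_at_top [of "0 :: nat"]
  proof eventually_elim
    case (elim n)
    then show ?case
      using R(1,2) split [of n] assms
      by (simp add: taylor_coeff_Li_star_decomp [of z R "of_int a"] taylor_coeff_antidiff_eq box_def T_def case_prod_beta')
  qed
  ultimately show ?thesis
    by (rule landau_o.big.in_cong [THEN iffD1, rotated])
qed

section \<open>Uniqueness of expansions with periodic coefficients\<close>

lemma finite_index_set_dominant:
  fixes D :: "(nat \<times> int) set"
  assumes "finite D" "D \<noteq> {}"
  obtains q0 where "q0 \<in> D"
    "\<And>q. q \<in> D \<Longrightarrow> q \<noteq> q0 \<Longrightarrow> snd q0 < snd q \<or> snd q = snd q0 \<and> fst q < fst q0"
proof -
  define m0 where "m0 = Min (snd ` D)"
  define l0 where "l0 = Max (fst ` {q \<in> D. snd q = m0})"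
  have m0: "m0 \<in> snd ` D" "\<And>q. q \<in> D \<Longrightarrow> m0 \<le> snd q"
    unfolding m0_def using assms by (auto intro: Min_in)
  then have l0: "l0 \<in> fst ` {q \<in> D. snd q = m0}" "\<And>q. q \<in> D \<Longrightarrow> snd q = m0 \<Longrightarrow> fst q \<le> l0"
    unfolding l0_def using assms(1) by (auto intro!: Max_in Max_ge)
  show ?thesis
  proof (rule that [of "(l0, m0)"])
    show "(l0, m0) \<in> D"
      using l0(1) by force
    fix q assume "q \<in> D" "q \<noteq> (l0, m0)"
    with m0(2) l0(2) show "snd (l0, m0) < snd q \<or> snd q = snd (l0, m0) \<and> fst q < fst (l0, m0)"
      by (cases q) fastforce
  qed
qed

lemma ln_power_powr_smallo:
  fixes m m0 :: real
  assumes "m0 < m \<or> m = m0 \<and> l < l0"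
  shows "(\<lambda>y. ln y ^ l * y powr - m) \<in> o(\<lambda>y. ln y ^ l0 * y powr - m0)"
  using assms
proof
  assume "m0 < m"
  then show ?thesis by real_asymp
next
  assume "m = m0 \<and> l < l0"
  then show ?thesis by real_asymp
qed

lemma scale_combination_bigo_imp_zero:
  fixes c :: "nat \<times> int \<Rightarrow> complex" and x :: "nat \<Rightarrow> real"
  assumes "finite S" "filterlim x at_top sequentially"
    and bigo: "(\<lambda>k. \<Sum>q\<in>S. c q * of_real (ln (x k) ^ fst q * x k powr - real_of_int (snd q)))
           \<in> O(\<lambda>k. of_real (x k powr - real_of_int A))"
    and "p \<in> S" "snd p < A"
  shows "c p = 0"
proof (rule ccontr)
  assume "c p \<noteq> 0"
  define \<phi> where "\<phi> q k = (of_real (ln (x k) ^ fst q * x k powr - real_of_int (snd q)) :: complex)"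
    for q :: "nat \<times> int" and k
  define D where "D = {q \<in> S. c q \<noteq> 0}"
  have "finite D" "p \<in> D"
    using assms(1,4) \<open>c p \<noteq> 0\<close> by (auto simp: D_def)
  then obtain q0 where "q0 \<in> D" and q0_dominant:
    "\<And>q. q \<in> D \<Longrightarrow> q \<noteq> q0 \<Longrightarrow> snd q0 < snd q \<or> snd q = snd q0 \<and> fst q < fst q0"
    by (elim finite_index_set_dominant) auto
  have real_o: "f \<in> o(g) \<Longrightarrow> (\<lambda>k. of_real (f (x k)) :: complex) \<in> o(\<lambda>k. of_real (g (x k)))" for f g
    using landau_o.small.compose [OF _ assms(2)] by (simp add: landau_o.small.of_real_iff)
  have "snd q0 < A"
    using q0_dominant [OF \<open>p \<in> D\<close>] \<open>snd p < A\<close> by (cases "p = q0") auto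
  then have "(\<lambda>y. y powr - real_of_int A) \<in> o(\<lambda>y. ln y ^ fst q0 * y powr - real_of_int (snd q0))"
    using ln_power_powr_smallo [of "snd q0" "A" 0 "fst q0"] by simp
  then have "(\<lambda>k. of_real (x k powr - real_of_int A) :: complex) \<in> o(\<phi> q0)"
    unfolding \<phi>_def [abs_def] by (rule real_o)
  with bigo have total: "(\<lambda>k. \<Sum>q\<in>S. c q * \<phi> q k) \<in> o(\<phi> q0)"
    unfolding \<phi>_def by (rule landau_o.big_small_trans)
  have rest: "(\<lambda>k. \<Sum>q\<in>D - {q0}. c q * \<phi> q k) \<in> o(\<phi> q0)"
  proof (intro big_sum_in_smallo)
    fix q assume q: "q \<in> D - {q0}"
    then have "\<phi> q \<in> o(\<phi> q0)"
      unfolding \<phi>_def [abs_def] using q0_dominant [of q]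
      by (intro real_o ln_power_powr_smallo) auto
    with q show "(\<lambda>k. c q * \<phi> q k) \<in> o(\<phi> q0)"
      by (simp add: D_def)
  qed
  have "(\<Sum>q\<in>S. c q * \<phi> q k) = (\<Sum>q\<in>D. c q * \<phi> q k)" for k
    using assms(1) by (intro sum.mono_neutral_right) (auto simp: D_def)
  then have "(\<Sum>q\<in>S. c q * \<phi> q k) - (\<Sum>q\<in>D - {q0}. c q * \<phi> q k) = c q0 * \<phi> q0 k" for k
    using \<open>finite D\<close> \<open>q0 \<in> D\<close> by (simp add: sum.remove)
  with sum_in_smallo(2) [OF total rest] \<open>q0 \<in> D\<close> have "\<forall>\<^sub>F k in sequentially. \<phi> q0 k = 0"
    by (simp add: D_def landau_o.small_refl_iff)
  moreover have "\<forall>\<^sub>F k in sequentially. x k > 1"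
    using assms(2) by (simp add: filterlim_at_top_dense)
  ultimately have "\<forall>\<^sub>F k in sequentially. False"
    by eventually_elim (simp add: \<phi>_def)
  then show False
    by simp
qed

lemma periodic_scale_combination_bigo_imp_zero:
  fixes v :: "nat \<times> int \<Rightarrow> nat \<Rightarrow> complex"
  assumes "finite S" "d > 0" "\<And>q n. q \<in> S \<Longrightarrow> n \<ge> 1 \<Longrightarrow> v q (n + d) = v q n"
    and bigo: "(\<lambda>n. \<Sum>q\<in>S. v q n * comparison_scale (fst q) (snd q) n)
           \<in> O(\<lambda>n. of_real (real n powr - real_of_int A))"
    and "p \<in> S" "snd p < A" "n \<ge> 1"
  shows "v p n = 0"
proof -
  have periodic: "v q (n + d * k) = v q n" if "q \<in> S" for q k
  proof (induction k)
    case (Suc k)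
    then show ?case
      using assms(3) [OF that, of "n + d * k"] assms(7) by (simp add: algebra_simps)
  qed simp
  have "filterlim (\<lambda>k. n + d * k) at_top sequentially"
    using assms(2) by (intro filterlim_subseq strict_monoI) simp
  then have "(\<lambda>k. \<Sum>q\<in>S. v q (n + d * k) * comparison_scale (fst q) (snd q) (n + d * k))
      \<in> O(\<lambda>k. of_real (real (n + d * k) powr - real_of_int A))"
    by (rule landau_o.big.compose [OF bigo])
  moreover have "filterlim (\<lambda>k. real (n + d * k)) at_top sequentially"
    by (intro filterlim_compose [OF filterlim_real_sequentially] \<open>filterlim (\<lambda>k. n + d * k) at_top sequentially\<close>)
  ultimately show ?thesis
    using periodic assms(1,5,6)
    by (intro scale_combination_bigo_imp_zero [of S "\<lambda>k. real (n + d * k)" "\<lambda>q. v q n" A])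
       (simp_all add: comparison_scale_def)
qed

lemma mono_vals_root_of_unity:
  assumes "\<And>\<zeta>. \<zeta> \<in> set zs \<Longrightarrow> \<zeta> ^ d = 1" "\<xi> \<in> mono_vals zs"
  shows "\<xi> ^ d = 1"
proof -
  obtain e where "\<xi> = (\<Prod>i<length zs. (zs ! i) ^ e i)"
    using assms(2) by (auto simp: mono_vals_def)
  then have "\<xi> ^ d = (\<Prod>i<length zs. ((zs ! i) ^ d) ^ e i)"
    by (simp add: prod_power_distrib flip: power_mult) (simp add: mult.commute)
  also have "\<dots> = 1"
    using assms(1) by (simp add: nth_mem)
  finally show ?thesis .
qed

lemma finite_mono_vals:
  assumes "d > 0" "\<And>\<zeta>. \<zeta> \<in> set zs \<Longrightarrow> \<zeta> ^ d = 1"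
  shows "finite (mono_vals zs)"
proof (rule finite_subset)
  show "mono_vals zs \<subseteq> {\<xi>. \<xi> ^ d = 1}"
    using mono_vals_root_of_unity [OF assms(2)] by blast
  show "finite {\<xi> :: complex. \<xi> ^ d = 1}"
    using assms(1) by (intro finite_roots_unity) simp
qed

lemma one_in_mono_vals: "1 \<in> mono_vals zs"
  unfolding mono_vals_def by (auto intro!: exI [of _ "\<lambda>_. 0"])

lemma in_mono_vals_single: "z \<in> mono_vals [z]"
  unfolding mono_vals_def by (auto intro!: exI [of _ "\<lambda>_. 1"])

lemma sum_powers_root_of_unity:
  fixes \<xi> :: complex
  assumes "\<xi> ^ d = 1" "d > 0"
  shows "(\<Sum>n=1..d. \<xi> ^ n) = (if \<xi> = 1 then of_nat d else 0)"
proof (cases "\<xi> = 1")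
  case False
  then have "(\<Sum>n=1..d. \<xi> ^ n) = (\<xi> ^ 1 - \<xi> ^ Suc d) / (1 - \<xi>)"
    using assms(2) by (simp add: sum_gp)
  with False assms(1) show ?thesis
    by simp
qed simp

lemma seq_alg_periodic:
  assumes "\<And>\<zeta>. \<zeta> \<in> set zs \<Longrightarrow> \<zeta> ^ d = 1" "u \<in> seq_alg zs" "n \<ge> 1"
  shows "u (n + d) = u n"
proof -
  obtain c where c: "\<And>n. n \<ge> 1 \<Longrightarrow> u n = (\<Sum>\<xi>\<in>mono_vals zs. c \<xi> * \<xi> ^ n)"
    using assms(2) by (auto simp: seq_alg_def)
  have "(\<Sum>\<xi>\<in>mono_vals zs. c \<xi> * \<xi> ^ (n + d)) = (\<Sum>\<xi>\<in>mono_vals zs. c \<xi> * \<xi> ^ n)"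
    using mono_vals_root_of_unity [OF assms(1)] by (intro sum.cong) (auto simp: power_add)
  with c assms(3) show ?thesis
    by simp
qed

lemma const_coord_eq_average:
  assumes "d > 0" "\<And>\<zeta>. \<zeta> \<in> set zs \<Longrightarrow> \<zeta> ^ d = 1" "u \<in> seq_alg zs"
  shows "const_coord zs u = (\<Sum>n=1..d. u n) / of_nat d"
proof -
  have average: "c 1 = (\<Sum>n=1..d. u n) / of_nat d"
    if c: "\<forall>n\<ge>1. u n = (\<Sum>\<xi>\<in>mono_vals zs. c \<xi> * \<xi> ^ n)" for c
  proof -
    have "(\<Sum>n=1..d. u n) = (\<Sum>n=1..d. \<Sum>\<xi>\<in>mono_vals zs. c \<xi> * \<xi> ^ n)"
      using c by simp
    also have "\<dots> = (\<Sum>\<xi>\<in>mono_vals zs. c \<xi> * (\<Sum>n=1..d. \<xi> ^ n))"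
      by (simp only: sum.swap [of _ "{1..d}"] sum_distrib_left)
    also have "\<dots> = (\<Sum>\<xi>\<in>mono_vals zs. if \<xi> = 1 then c 1 * of_nat d else 0)"
    proof (intro sum.cong refl)
      fix \<xi> assume "\<xi> \<in> mono_vals zs"
      from sum_powers_root_of_unity [OF mono_vals_root_of_unity [OF assms(2) this] assms(1)]
      show "c \<xi> * (\<Sum>n=1..d. \<xi> ^ n) = (if \<xi> = 1 then c 1 * of_nat d else 0)"
        by simp
    qed
    also have "\<dots> = c 1 * of_nat d"
      using finite_mono_vals [OF assms(1,2)] one_in_mono_vals by simp
    finally show ?thesis
      using assms(1) by simp
  qed
  obtain c where "\<forall>n\<ge>1. u n = (\<Sum>\<xi>\<in>mono_vals zs. c \<xi> * \<xi> ^ n)"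
    using assms(3) by (auto simp: seq_alg_def)
  then show ?thesis
    unfolding const_coord_def using average by (intro the_equality) blast+
qed

lemma geometric_seq_in_seq_alg:
  assumes "finite (mono_vals zs)" "\<xi> \<in> mono_vals zs"
  shows "(\<lambda>n. \<xi> ^ n * a) \<in> seq_alg zs"
proof -
  have "(\<Sum>\<eta>\<in>mono_vals zs. (if \<eta> = \<xi> then a else 0) * \<eta> ^ n) =
      (\<Sum>\<eta>\<in>mono_vals zs. if \<eta> = \<xi> then \<xi> ^ n * a else 0)" for n
    by (intro sum.cong) (auto simp: mult.commute)
  then have expand: "\<xi> ^ n * a = (\<Sum>\<eta>\<in>mono_vals zs. (if \<eta> = \<xi> then a else 0) * \<eta> ^ n)" for n
    using assms by simp
  show ?thesis
    unfolding seq_alg_def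
    by (intro CollectI exI [of _ "\<lambda>\<eta>. if \<eta> = \<xi> then a else 0"] allI impI) (simp only: expand)
qed

lemma const_coord_geometric_seq:
  assumes "d > 0" "\<And>\<zeta>. \<zeta> \<in> set zs \<Longrightarrow> \<zeta> ^ d = 1" "\<xi> \<in> mono_vals zs" "\<xi> \<noteq> 1"
  shows "const_coord zs (\<lambda>n. \<xi> ^ n * a) = 0"
proof -
  have "const_coord zs (\<lambda>n. \<xi> ^ n * a) = (\<Sum>n=1..d. \<xi> ^ n) * a / of_nat d"
    using assms by (simp add: const_coord_eq_average geometric_seq_in_seq_alg finite_mono_vals
        sum_distrib_right)
  also have "\<dots> = 0"
    using sum_powers_root_of_unity [OF mono_vals_root_of_unity [OF assms(2,3)] assms(1)] assms(4)
    by simp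
  finally show ?thesis .
qed

lemma const_coord_cong:
  assumes "\<And>n. n \<ge> 1 \<Longrightarrow> u n = v n"
  shows "const_coord zs u = const_coord zs v"
  unfolding const_coord_def using assms by (intro arg_cong [where f = The] ext) auto

lemma asymp_exp_precD:
  assumes "asymp_exp_prec zs a F A u"
  shows "u k l m \<in> seq_alg zs" "finite {(l, m). u k l m \<noteq> (\<lambda>_. 0)}"
    "(\<lambda>n. F n k - (\<Sum>(l, m)\<in>{(l, m). u k l m \<noteq> (\<lambda>_. 0)}. u k l m n * comparison_scale l m n))
       \<in> O(\<lambda>n. of_real (real n powr - real_of_int A))"
  using assms unfolding asymp_exp_prec_def comparison_scale_def by blast+

lemma asymp_exp_prec_unique:
  assumes "d > 0" "\<And>\<zeta>. \<zeta> \<in> set zs \<Longrightarrow> \<zeta> ^ d = 1"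
    and u: "asymp_exp_prec zs a F A u" and v: "asymp_exp_prec zs a F A v"
    and "m < A" "n \<ge> 1"
  shows "u k l m n = v k l m n"
proof -
  define Su where "Su = {(l, m). u k l m \<noteq> (\<lambda>_. 0)}"
  define Sv where "Sv = {(l, m). v k l m \<noteq> (\<lambda>_. 0)}"
  define w where "w q n = u k (fst q) (snd q) n - v k (fst q) (snd q) n" for q n
  have "finite (Su \<union> Sv)"
    using asymp_exp_precD(2) [OF u] asymp_exp_precD(2) [OF v] by (simp add: Su_def Sv_def)
  have sum_eq: "(\<Sum>(l, m)\<in>S'. f l m n * comparison_scale l m n) =
      (\<Sum>q\<in>Su \<union> Sv. f (fst q) (snd q) n * comparison_scale (fst q) (snd q) n)"
    if "S' \<subseteq> Su \<union> Sv" "\<And>l m. (l, m) \<notin> S' \<Longrightarrow> f l m = (\<lambda>_. 0)" for S' f n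
    unfolding case_prod_beta' using that \<open>finite (Su \<union> Sv)\<close>
    by (intro sum.mono_neutral_left) (auto simp: prod_eq_iff)
  have "(\<lambda>n. (F n k - (\<Sum>(l, m)\<in>Sv. v k l m n * comparison_scale l m n)) -
      (F n k - (\<Sum>(l, m)\<in>Su. u k l m n * comparison_scale l m n)))
      \<in> O(\<lambda>n. of_real (real n powr - real_of_int A))"
    using asymp_exp_precD(3) [OF u] asymp_exp_precD(3) [OF v]
    unfolding Su_def Sv_def by (rule sum_in_bigo(2) [rotated])
  also have "(\<lambda>n. (F n k - (\<Sum>(l, m)\<in>Sv. v k l m n * comparison_scale l m n)) -
      (F n k - (\<Sum>(l, m)\<in>Su. u k l m n * comparison_scale l m n))) =
      (\<lambda>n. \<Sum>q\<in>Su \<union> Sv. w q n * comparison_scale (fst q) (snd q) n)"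
    by (subst (1 2) sum_eq) (auto simp: Su_def Sv_def w_def algebra_simps sum_subtractf [symmetric])
  finally have bigo: "(\<lambda>n. \<Sum>q\<in>Su \<union> Sv. w q n * comparison_scale (fst q) (snd q) n)
      \<in> O(\<lambda>n. of_real (real n powr - real_of_int A))" .
  show ?thesis
  proof (cases "(l, m) \<in> Su \<union> Sv")
    case True
    have "w q (n + d) = w q n" if "n \<ge> 1" for q n
      using seq_alg_periodic [OF assms(2) asymp_exp_precD(1) [OF u] that]
        seq_alg_periodic [OF assms(2) asymp_exp_precD(1) [OF v] that]
      by (simp add: w_def)
    then have "w (l, m) n = 0"
      using periodic_scale_combination_bigo_imp_zero [OF \<open>finite (Su \<union> Sv)\<close> assms(1) _ bigo True]
        assms(5,6) by simp
    then show ?thesis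
      by (simp add: w_def)
  next
    case False
    then show ?thesis
      by (simp add: Su_def Sv_def)
  qed
qed

lemma formal_complete_exp_coeff:
  assumes "d > 0" "\<And>\<zeta>. \<zeta> \<in> set zs \<Longrightarrow> \<zeta> ^ d = 1"
    and "formal_complete_exp zs a F G" "asymp_exp_prec zs a F A u" "m < A"
  shows "G l m = (\<lambda>k. const_coord zs (u k l m))"
proof -
  obtain v where v: "asymp_exp_prec zs a F A v"
    and G: "\<And>l m. m \<le> A \<Longrightarrow> G l m = (\<lambda>k. const_coord zs (v k l m))"
    using assms(3) unfolding formal_complete_exp_def by blast
  have "const_coord zs (v k l m) = const_coord zs (u k l m)" for k
    using asymp_exp_prec_unique [OF assms(1,2) v assms(4,5)] by (intro const_coord_cong)
  with G assms(5) show ?thesis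
    by simp
qed

lemma the_formal_complete_exp_eq_zero:
  assumes "d > 0" "\<And>\<zeta>. \<zeta> \<in> set zs \<Longrightarrow> \<zeta> ^ d = 1"
    and "\<And>A. asymp_exp_prec zs a F A (U A)" "\<And>A k l m. const_coord zs (U A k l m) = 0"
  shows "(THE G. formal_complete_exp zs a F G) = (\<lambda>l m k. 0)"
proof (rule the_equality)
  show "formal_complete_exp zs a F (\<lambda>l m k. 0)"
    unfolding formal_complete_exp_def
  proof (intro conjI allI)
    fix A
    show "\<exists>u. asymp_exp_prec zs a F A u \<and> (\<forall>l m. m \<le> A \<longrightarrow> (\<lambda>k. 0) = (\<lambda>k. const_coord zs (u k l m)))"
      using assms(3,4) by (intro exI [of _ "U A"]) simp
  qed simp
  show "G = (\<lambda>l m k. 0)" if "formal_complete_exp zs a F G" for G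
  proof (intro ext)
    fix l :: nat and m :: int and k :: nat
    have "G l m = (\<lambda>k. const_coord zs (U (m + 1) k l m))"
      using formal_complete_exp_coeff [OF assms(1,2) that assms(3), where A = "m + 1"] by simp
    then show "G l m k = 0"
      using assms(4) by simp
  qed
qed

section \<open>The expansion of Li_star\<close>

definition Li_star_exp :: "complex \<Rightarrow> int \<Rightarrow> int \<Rightarrow> nat \<Rightarrow> nat \<Rightarrow> int \<Rightarrow> nat \<Rightarrow> complex" where
  "Li_star_exp z a A k l m =
     (\<lambda>n. z ^ n * (if l \<le> k \<and> a \<le> m \<and> m \<le> A then Li_star_exp_coeff z a k l m else 0))"

lemma const_coord_Li_star_exp:
  assumes "d > 0" "z ^ d = 1" "z \<noteq> 1"
  shows "const_coord [z] (Li_star_exp z a A k l m) = 0"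
  unfolding Li_star_exp_def using assms in_mono_vals_single by (intro const_coord_geometric_seq) auto

lemma asymp_exp_prec_Li_star:
  assumes "d > 0" "z ^ d = 1" "z \<noteq> 1"
  shows "asymp_exp_prec [z] (of_int a) (\<lambda>N k. taylor_coeff (Li_star z N) (of_int a) k) A (Li_star_exp z a A)"
proof -
  have "norm z ^ d = 1 ^ d"
    using assms(2) by (metis norm_one norm_power power_one)
  then have "norm z = 1"
    by (rule power_eq_imp_eq_base [OF _ _ _ assms(1)]) simp_all
  have finite: "finite (mono_vals [z])"
    using assms(1,2) by (intro finite_mono_vals) auto
  have support: "{(l, m). Li_star_exp z a A k l m \<noteq> (\<lambda>_. 0)} \<subseteq> {..k} \<times> {a..A}" for k
    by (auto simp: Li_star_exp_def)
  have "(\<Sum>(l, m)\<in>{(l, m). Li_star_exp z a A k l m \<noteq> (\<lambda>_. 0)}. Li_star_exp z a A k l m n * comparison_scale l m n) =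
      (\<Sum>(l, m)\<in>{..k} \<times> {a..A}. z ^ n * Li_star_exp_coeff z a k l m * comparison_scale l m n)" for k n
    by (intro sum.mono_neutral_cong_left support) (auto simp: Li_star_exp_def fun_eq_iff)
  with taylor_coeff_Li_star_expansion [OF \<open>norm z = 1\<close> assms(3)]
  have bigo: "(\<lambda>n. taylor_coeff (Li_star z n) (of_int a) k -
      (\<Sum>(l, m)\<in>{(l, m). Li_star_exp z a A k l m \<noteq> (\<lambda>_. 0)}. Li_star_exp z a A k l m n * comparison_scale l m n))
    \<in> O(\<lambda>n. of_real (real n powr (- real_of_int A)))" for k
    by simp
  show ?thesis
    unfolding asymp_exp_prec_def
  proof (intro conjI allI impI)
    show "Li_star_exp z a A k l m \<in> seq_alg [z]" for k l m
      unfolding Li_star_exp_def using finite in_mono_vals_single by (rule geometric_seq_in_seq_alg)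
    show "Li_star_exp z a A k l m = (\<lambda>_. 0)" if "A < m" for k l m
      using that by (simp add: Li_star_exp_def)
    show "finite {(l, m). Li_star_exp z a A k l m \<noteq> (\<lambda>_. 0)}" for k
      using support by (rule finite_subset) simp
    show "\<exists>m0. \<forall>k l m. m \<le> m0 \<longrightarrow> Li_star_exp z a A k l m = (\<lambda>_. 0)"
      by (intro exI [of _ "a - 1"]) (simp add: Li_star_exp_def)
    show "\<exists>\<epsilon>>0. \<forall>s. cmod (s - of_int a) < \<epsilon> \<longrightarrow>
        summable (\<lambda>k. const_coord [z] (Li_star_exp z a A k l m) * (s - of_int a) ^ k)" for l m
      using assms by (intro exI [of _ 1]) (simp add: const_coord_Li_star_exp)
  qed (use bigo in \<open>simp add: comparison_scale_def\<close>)
qed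

theorem proposition2:
  fixes a :: int and z :: complex
  assumes "\<exists>d>0. z ^ d = 1" and "z \<noteq> 1"
  shows "has_complete_asymp_exp [z] (of_int a)
           (\<lambda>N k. taylor_coeff (Li_star z N) (of_int a) k) \<and>
         (THE G. formal_complete_exp [z] (of_int a)
           (\<lambda>N k. taylor_coeff (Li_star z N) (of_int a) k) G) = (\<lambda>l m k. 0)"
proof -
  obtain d where d: "d > 0" "z ^ d = 1"
    using assms(1) by blast
  note expansion = asymp_exp_prec_Li_star [OF d assms(2)]
  have "(THE G. formal_complete_exp [z] (of_int a) (\<lambda>N k. taylor_coeff (Li_star z N) (of_int a) k) G) =
      (\<lambda>l m k. 0)"
    using d expansion const_coord_Li_star_exp [OF d assms(2)]
    by (intro the_formal_complete_exp_eq_zero [of d]) auto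
  with expansion show ?thesis
    unfolding has_complete_asymp_exp_def by blast
qed

end
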